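(* Consider a financial network with $n$ institutions and $m$ underlying assets with prices $\vec p=(p_1,\dots,p_m)\ge 0$, asset-holding matrix $D=(D_{ik})$ and cross-holding matrix $C=(C_{ij})$ as described in the context. If the cross-holding graph has no directed cycles, then for every institution $i$ the equity valuation satisfies $V_i\le \|\vec p\|_1$.
   Context: Model: there are $n$ financial institutions and $m$ underlying assets; asset $k$ has price $p_k\ge 0$. $D_{ik}\ge 0$ is the fraction of asset $k$ owned by institution $i$ (so $\sum_i D_{ik}\le 1$ for each $k$). $C=(C_{ij})$ is an $n\times n$ nonnegative matrix, $C_{ij}$ being the fraction of institution $j$ owned by institution $i$, with $C_{ii}=0$. The self-holding of institution $j$ is $\hat C_{jj}=1-\sum_i C_{ij}$, assumed to satisfy $\hat C_{jj}>0$; $\hat C$ is the diagonal matrix with these entries. The equity valuation is the vector $\vec V$ solving $\vec V=D\vec p+C\vec V$, i.e. $\vec V=(I-C)^{-1}D\vec p$, and the market valuation is $\vec v=\hat C\vec V=\hat C(I-C)^{-1}D\vec p$. The cross-holding graph is the directed graph on the institutions with an edge from $j$ to $i$ whenever $C_{ij}>0$. *)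

theory Defs
  imports "HOL-Analysis.Analysis"
begin

definition cross_holding_graph :: "real^'n^'n \<Rightarrow> ('n \<times> 'n) set" where
  "cross_holding_graph C = {(j, i). C $ i $ j > 0}"

definition self_holding :: "real^'n^'n \<Rightarrow> 'n \<Rightarrow> real" where
  "self_holding C j = 1 - (\<Sum>i\<in>UNIV. C $ i $ j)"

end

theory Submission
  imports Defs
begin

text \<open>Let \<open>S\<close> be the set of institutions from which \<open>i\<close> can be reached in the cross-holding
  graph. Rows of \<open>C\<close> indexed by \<open>S\<close> vanish outside \<open>S\<close>, so summing the valuation equation
  over \<open>S\<close> gives \<open>\<Sum>j\<in>S. (1 - \<Sum>k\<in>S. C\<^sub>k\<^sub>j) V\<^sub>j = \<Sum>i\<in>S. (Dp)\<^sub>i\<close>. All coefficients on the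
  left are nonnegative because self-holdings are positive, the coefficient of \<open>i\<close> itself is \<open>1\<close>
  by acyclicity, and \<open>V \<ge> 0\<close> by well-founded induction along the graph. Hence \<open>V\<^sub>i\<close> is
  at most the total value \<open>\<Sum>i. (Dp)\<^sub>i\<close> of the assets held, which is at most \<open>\<parallel>p\<parallel>\<^sub>1\<close>.\<close>

lemma matrix_vector_mult_component:
  "(A *v x) $ i = (\<Sum>j\<in>UNIV. A $ i $ j * x $ j)"
  by (simp add: matrix_vector_mult_def)

lemma in_cross_holding_graph_iff:
  assumes "\<And>i j. C $ i $ j \<ge> 0"
  shows "(j, i) \<in> cross_holding_graph C \<longleftrightarrow> C $ i $ j \<noteq> 0"
  using assms[of i j] by (auto simp: cross_holding_graph_def)

lemma wf_cross_holding_graph: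
  fixes C :: "real^'n^'n"
  assumes "acyclic (cross_holding_graph C)"
  shows "wf (cross_holding_graph C)"
  using assms by (intro finite_acyclic_wf) auto

lemma fixed_point_nonneg:
  fixes C :: "real^'n^'n" and b V :: "real^'n"
  assumes C_nonneg: "\<And>i j. C $ i $ j \<ge> 0"
    and b_nonneg: "\<And>i. b $ i \<ge> 0"
    and wf: "wf (cross_holding_graph C)"
    and V_eq: "V = b + C *v V"
  shows "V $ i \<ge> 0"
  using wf
proof (induction i rule: wf_induct_rule)
  case (less i)
  have "C $ i $ j * V $ j \<ge> 0" for j
    using less[of j] C_nonneg[of i j] in_cross_holding_graph_iff[OF C_nonneg, of j i]
    by (cases "C $ i $ j = 0") auto
  then have "(C *v V) $ i \<ge> 0"
    unfolding matrix_vector_mult_component by (intro sum_nonneg) auto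
  then show ?case
    using arg_cong[OF V_eq, of "\<lambda>x. x $ i"] b_nonneg[of i] by simp
qed

lemma sum_fixed_point_over_closed_set:
  fixes C :: "real^'n^'n" and b V :: "real^'n"
  assumes V_eq: "V = b + C *v V"
    and closed: "\<And>i j. i \<in> S \<Longrightarrow> j \<notin> S \<Longrightarrow> C $ i $ j = 0"
  shows "(\<Sum>j\<in>S. (1 - (\<Sum>k\<in>S. C $ k $ j)) * V $ j) = (\<Sum>i\<in>S. b $ i)"
proof -
  have row: "V $ i = b $ i + (\<Sum>j\<in>S. C $ i $ j * V $ j)" if "i \<in> S" for i
  proof -
    have "(C *v V) $ i = (\<Sum>j\<in>S. C $ i $ j * V $ j)"
      unfolding matrix_vector_mult_component
      by (rule sum.mono_neutral_right) (auto simp: closed[OF that])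
    then show ?thesis
      using arg_cong[OF V_eq, of "\<lambda>x. x $ i"] by simp
  qed
  have "(\<Sum>i\<in>S. V $ i) = (\<Sum>i\<in>S. b $ i) + (\<Sum>i\<in>S. \<Sum>j\<in>S. C $ i $ j * V $ j)"
    by (simp add: row sum.distrib)
  also have "(\<Sum>i\<in>S. \<Sum>j\<in>S. C $ i $ j * V $ j) = (\<Sum>j\<in>S. (\<Sum>k\<in>S. C $ k $ j) * V $ j)"
    by (subst sum.swap) (simp add: sum_distrib_right)
  finally show ?thesis
    by (simp add: left_diff_distrib sum_subtractf)
qed

lemma ancestors_closed:
  assumes "\<And>i j. C $ i $ j \<ge> 0"
    and "i \<in> {k. (k, i0) \<in> (cross_holding_graph C)\<^sup>*}"
    and "j \<notin> {k. (k, i0) \<in> (cross_holding_graph C)\<^sup>*}"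
  shows "C $ i $ j = 0"
  using assms in_cross_holding_graph_iff[OF assms(1), of j i]
  by (auto intro: converse_rtrancl_into_rtrancl)

lemma acyclic_no_holding_by_ancestor:
  assumes "acyclic (cross_holding_graph C)"
    and "(k, i0) \<in> (cross_holding_graph C)\<^sup>*"
  shows "C $ k $ i0 \<le> 0"
proof (rule ccontr)
  assume "\<not> C $ k $ i0 \<le> 0"
  then have "(i0, k) \<in> cross_holding_graph C"
    by (simp add: cross_holding_graph_def)
  with assms(2) have "(i0, i0) \<in> (cross_holding_graph C)\<^sup>+"
    by auto
  with assms(1) show False
    by (simp add: acyclic_def)
qed

lemma sum_asset_values_le_norm1:
  fixes D :: "real^'m^'n" and p :: "real^'m"
  assumes "\<And>k. p $ k \<ge> 0"
    and "\<And>k. (\<Sum>i\<in>UNIV. D $ i $ k) \<le> 1"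
  shows "(\<Sum>i\<in>UNIV. (D *v p) $ i) \<le> (\<Sum>k\<in>UNIV. \<bar>p $ k\<bar>)"
proof -
  have "(\<Sum>i\<in>UNIV. (D *v p) $ i) = (\<Sum>k\<in>UNIV. (\<Sum>i\<in>UNIV. D $ i $ k) * p $ k)"
    unfolding matrix_vector_mult_component
    by (subst sum.swap) (simp add: sum_distrib_right)
  also have "\<dots> \<le> (\<Sum>k\<in>UNIV. 1 * p $ k)"
    by (intro sum_mono mult_right_mono) (simp_all add: assms)
  finally show ?thesis
    using assms(1) by simp
qed

theorem lemma1:
  fixes C :: "real^'n^'n" and D :: "real^'m^'n" and p :: "real^'m" and V :: "real^'n"
  assumes p_nonneg: "\<And>k. p $ k \<ge> 0"
    and D_nonneg: "\<And>i k. D $ i $ k \<ge> 0"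
    and D_col: "\<And>k. (\<Sum>i\<in>UNIV. D $ i $ k) \<le> 1"
    and C_nonneg: "\<And>i j. C $ i $ j \<ge> 0"
    and C_diag: "\<And>i. C $ i $ i = 0"
    and self_pos: "\<And>j. self_holding C j > 0"
    and acyc: "acyclic (cross_holding_graph C)"
    and V_eq: "V = D *v p + C *v V"
  shows "\<forall>i. V $ i \<le> (\<Sum>k\<in>UNIV. \<bar>p $ k\<bar>)"
proof
  fix i0
  define S where "S = {k. (k, i0) \<in> (cross_holding_graph C)\<^sup>*}"
  define coef where "coef j = 1 - (\<Sum>k\<in>S. C $ k $ j)" for j
  have Dp_nonneg: "(D *v p) $ i \<ge> 0" for i
    unfolding matrix_vector_mult_component by (intro sum_nonneg) (simp add: D_nonneg p_nonneg)
  have V_nonneg: "V $ j \<ge> 0" for j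
    by (rule fixed_point_nonneg[OF C_nonneg Dp_nonneg wf_cross_holding_graph[OF acyc] V_eq])
  have coef_nonneg: "coef j \<ge> 0" for j
  proof -
    have "(\<Sum>k\<in>S. C $ k $ j) \<le> (\<Sum>k\<in>UNIV. C $ k $ j)"
      by (rule sum_mono2) (auto simp: C_nonneg)
    then show ?thesis
      using self_pos[of j] by (simp add: coef_def self_holding_def)
  qed
  have "coef i0 = 1"
    using acyclic_no_holding_by_ancestor[OF acyc] C_nonneg
    by (auto simp: coef_def S_def intro!: sum.neutral intro: antisym)
  then have "V $ i0 \<le> (\<Sum>j\<in>S. coef j * V $ j)"
    using member_le_sum[of i0 S "\<lambda>j. coef j * V $ j"] coef_nonneg V_nonneg
    by (simp add: S_def)
  also have "\<dots> = (\<Sum>i\<in>S. (D *v p) $ i)"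
    unfolding coef_def S_def
    by (rule sum_fixed_point_over_closed_set[OF V_eq ancestors_closed[OF C_nonneg]])
  also have "\<dots> \<le> (\<Sum>i\<in>UNIV. (D *v p) $ i)"
    by (rule sum_mono2) (simp_all add: Dp_nonneg)
  also have "\<dots> \<le> (\<Sum>k\<in>UNIV. \<bar>p $ k\<bar>)"
    by (rule sum_asset_values_le_norm1[OF p_nonneg D_col])
  finally show "V $ i0 \<le> (\<Sum>k\<in>UNIV. \<bar>p $ k\<bar>)" .
qed

end
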